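(* Let $P$ be a small $\mathcal L$-substructure of $\mathfrak D$. Then there exists a small $\mathcal L$-substructure $P^*$ of $\mathfrak D$ with $P\subseteq P^*$ and $P^*$ PAC.
   Context: $\mathfrak D$ is a $\kappa_{\mathfrak D}$-saturated, $\kappa_{\mathfrak D}$-strongly homogeneous $\mathcal L$-structure ("small": cardinality $<\kappa_{\mathfrak D}$; no further assumptions on its theory are needed). Regular: for small $E\subseteq A\subseteq\mathfrak D$, $E\subseteq A$ is regular if $\mathrm{dcl}^{\mathfrak D}_{\mathcal L}(A)\cap\mathrm{acl}^{\mathfrak D}_{\mathcal L}(E)=\mathrm{dcl}^{\mathfrak D}_{\mathcal L}(E)$. PAC: a small $\mathcal L$-substructure $N$ of $\mathfrak D$ is PAC if for every small $\mathcal L$-substructure $N'\supseteq N$ of $\mathfrak D$ with $N\subseteq N'$ regular, $N$ is existentially closed in $N'$ (every quantifier-free $\mathcal L$-formula with parameters in $N$ having a solution in $N'$ has one in $N$). *)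

theory Defs
  imports Main
begin

text \<open>A language L is given by function symbols of type 'f and relation symbols of
type 'r together with their arities (constants = 0-ary function symbols).
The big structure D has universe UNIV of type 'a.\<close>

record ('f, 'r, 'a) struc =
  fun_arity :: "'f \<Rightarrow> nat"
  rel_arity :: "'r \<Rightarrow> nat"
  fun_int   :: "'f \<Rightarrow> 'a list \<Rightarrow> 'a"
  rel_int   :: "'r \<Rightarrow> 'a list \<Rightarrow> bool"

datatype ('f, 'a) trm = Var nat | Par 'a | App 'f "('f, 'a) trm list"

datatype ('f, 'r, 'a) fm =
    FEq "('f, 'a) trm" "('f, 'a) trm"
  | FRel 'r "('f, 'a) trm list"
  | FNeg "('f, 'r, 'a) fm"
  | FConj "('f, 'r, 'a) fm" "('f, 'r, 'a) fm"
  | FEx nat "('f, 'r, 'a) fm"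

fun evalt :: "('f, 'r, 'a) struc \<Rightarrow> (nat \<Rightarrow> 'a) \<Rightarrow> ('f, 'a) trm \<Rightarrow> 'a" where
  "evalt M e (Var v) = e v"
| "evalt M e (Par a) = a"
| "evalt M e (App f ts) = fun_int M f (map (evalt M e) ts)"

fun sat :: "('f, 'r, 'a) struc \<Rightarrow> (nat \<Rightarrow> 'a) \<Rightarrow> ('f, 'r, 'a) fm \<Rightarrow> bool" where
  "sat M e (FEq s t) = (evalt M e s = evalt M e t)"
| "sat M e (FRel r ts) = rel_int M r (map (evalt M e) ts)"
| "sat M e (FNeg \<phi>) = (\<not> sat M e \<phi>)"
| "sat M e (FConj \<phi> \<psi>) = (sat M e \<phi> \<and> sat M e \<psi>)"
| "sat M e (FEx x \<phi>) = (\<exists>b. sat M (e(x := b)) \<phi>)"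

fun wf_trm :: "('f, 'r, 'a) struc \<Rightarrow> ('f, 'a) trm \<Rightarrow> bool" where
  "wf_trm M (Var v) = True"
| "wf_trm M (Par a) = True"
| "wf_trm M (App f ts) = (length ts = fun_arity M f \<and> (\<forall>t\<in>set ts. wf_trm M t))"

fun wf_fm :: "('f, 'r, 'a) struc \<Rightarrow> ('f, 'r, 'a) fm \<Rightarrow> bool" where
  "wf_fm M (FEq s t) = (wf_trm M s \<and> wf_trm M t)"
| "wf_fm M (FRel r ts) = (length ts = rel_arity M r \<and> (\<forall>t\<in>set ts. wf_trm M t))"
| "wf_fm M (FNeg \<phi>) = wf_fm M \<phi>"
| "wf_fm M (FConj \<phi> \<psi>) = (wf_fm M \<phi> \<and> wf_fm M \<psi>)"
| "wf_fm M (FEx x \<phi>) = wf_fm M \<phi>"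

fun qf :: "('f, 'r, 'a) fm \<Rightarrow> bool" where
  "qf (FEq s t) = True"
| "qf (FRel r ts) = True"
| "qf (FNeg \<phi>) = qf \<phi>"
| "qf (FConj \<phi> \<psi>) = (qf \<phi> \<and> qf \<psi>)"
| "qf (FEx x \<phi>) = False"

fun fvt :: "('f, 'a) trm \<Rightarrow> nat set" where
  "fvt (Var v) = {v}"
| "fvt (Par a) = {}"
| "fvt (App f ts) = (\<Union>t\<in>set ts. fvt t)"

fun fv :: "('f, 'r, 'a) fm \<Rightarrow> nat set" where
  "fv (FEq s t) = fvt s \<union> fvt t"
| "fv (FRel r ts) = (\<Union>t\<in>set ts. fvt t)"
| "fv (FNeg \<phi>) = fv \<phi>"
| "fv (FConj \<phi> \<psi>) = fv \<phi> \<union> fv \<psi>"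
| "fv (FEx x \<phi>) = fv \<phi> - {x}"

fun parst :: "('f, 'a) trm \<Rightarrow> 'a set" where
  "parst (Var v) = {}"
| "parst (Par a) = {a}"
| "parst (App f ts) = (\<Union>t\<in>set ts. parst t)"

fun pars :: "('f, 'r, 'a) fm \<Rightarrow> 'a set" where
  "pars (FEq s t) = parst s \<union> parst t"
| "pars (FRel r ts) = (\<Union>t\<in>set ts. parst t)"
| "pars (FNeg \<phi>) = pars \<phi>"
| "pars (FConj \<phi> \<psi>) = pars \<phi> \<union> pars \<psi>"
| "pars (FEx x \<phi>) = pars \<phi>"

fun mapt :: "('a \<Rightarrow> 'a) \<Rightarrow> ('f, 'a) trm \<Rightarrow> ('f, 'a) trm" where
  "mapt g (Var v) = Var v"
| "mapt g (Par a) = Par (g a)"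
| "mapt g (App f ts) = App f (map (mapt g) ts)"

fun mapf :: "('a \<Rightarrow> 'a) \<Rightarrow> ('f, 'r, 'a) fm \<Rightarrow> ('f, 'r, 'a) fm" where
  "mapf g (FEq s t) = FEq (mapt g s) (mapt g t)"
| "mapf g (FRel r ts) = FRel r (map (mapt g) ts)"
| "mapf g (FNeg \<phi>) = FNeg (mapf g \<phi>)"
| "mapf g (FConj \<phi> \<psi>) = FConj (mapf g \<phi>) (mapf g \<psi>)"
| "mapf g (FEx x \<phi>) = FEx x (mapf g \<phi>)"

text \<open>kappa is a cardinal given as a cardinal order; small means cardinality < kappa.\<close>
definition small :: "'k rel \<Rightarrow> 'a set \<Rightarrow> bool" where
  "small kappa A \<longleftrightarrow> (card_of A, kappa) \<in> ordLess"

definition formula1_over :: "('f, 'r, 'a) struc \<Rightarrow> 'a set \<Rightarrow> ('f, 'r, 'a) fm \<Rightarrow> bool" where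
  "formula1_over M A \<phi> \<longleftrightarrow> wf_fm M \<phi> \<and> pars \<phi> \<subseteq> A \<and> fv \<phi> \<subseteq> {0}"

definition saturated :: "'k rel \<Rightarrow> ('f, 'r, 'a) struc \<Rightarrow> bool" where
  "saturated kappa M \<longleftrightarrow>
     (\<forall>A \<Phi>. small kappa A \<and> (\<forall>\<phi>\<in>\<Phi>. formula1_over M A \<phi>) \<and>
        (\<forall>\<Psi>\<subseteq>\<Phi>. finite \<Psi> \<longrightarrow> (\<exists>c. \<forall>\<phi>\<in>\<Psi>. sat M (\<lambda>_. c) \<phi>))
        \<longrightarrow> (\<exists>c. \<forall>\<phi>\<in>\<Phi>. sat M (\<lambda>_. c) \<phi>))"

definition elementary_map :: "('f, 'r, 'a) struc \<Rightarrow> 'a set \<Rightarrow> ('a \<Rightarrow> 'a) \<Rightarrow> bool" where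
  "elementary_map M A g \<longleftrightarrow>
     (\<forall>\<phi>. wf_fm M \<phi> \<and> pars \<phi> \<subseteq> A \<and> fv \<phi> = {} \<longrightarrow>
        (\<forall>e. sat M e \<phi> \<longleftrightarrow> sat M e (mapf g \<phi>)))"

definition automorphism :: "('f, 'r, 'a) struc \<Rightarrow> ('a \<Rightarrow> 'a) \<Rightarrow> bool" where
  "automorphism M \<sigma> \<longleftrightarrow> bij \<sigma> \<and>
     (\<forall>f xs. length xs = fun_arity M f \<longrightarrow> \<sigma> (fun_int M f xs) = fun_int M f (map \<sigma> xs)) \<and>
     (\<forall>r xs. length xs = rel_arity M r \<longrightarrow> (rel_int M r (map \<sigma> xs) \<longleftrightarrow> rel_int M r xs))"

definition strongly_homogeneous :: "'k rel \<Rightarrow> ('f, 'r, 'a) struc \<Rightarrow> bool" where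
  "strongly_homogeneous kappa M \<longleftrightarrow>
     (\<forall>A g. small kappa A \<and> elementary_map M A g \<longrightarrow>
        (\<exists>\<sigma>. automorphism M \<sigma> \<and> (\<forall>a\<in>A. \<sigma> a = g a)))"

definition dcl :: "('f, 'r, 'a) struc \<Rightarrow> 'a set \<Rightarrow> 'a set" where
  "dcl M A = {b. \<exists>\<phi>. formula1_over M A \<phi> \<and> {c. sat M (\<lambda>_. c) \<phi>} = {b}}"

definition acl :: "('f, 'r, 'a) struc \<Rightarrow> 'a set \<Rightarrow> 'a set" where
  "acl M A = {b. \<exists>\<phi>. formula1_over M A \<phi> \<and> finite {c. sat M (\<lambda>_. c) \<phi>} \<and> sat M (\<lambda>_. b) \<phi>}"

definition substructure :: "('f, 'r, 'a) struc \<Rightarrow> 'a set \<Rightarrow> bool" where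
  "substructure M N \<longleftrightarrow>
     (\<forall>f xs. length xs = fun_arity M f \<and> set xs \<subseteq> N \<longrightarrow> fun_int M f xs \<in> N)"

definition regular :: "('f, 'r, 'a) struc \<Rightarrow> 'a set \<Rightarrow> 'a set \<Rightarrow> bool" where
  "regular M E A \<longleftrightarrow> dcl M A \<inter> acl M E = dcl M E"

definition ex_closed :: "('f, 'r, 'a) struc \<Rightarrow> 'a set \<Rightarrow> 'a set \<Rightarrow> bool" where
  "ex_closed M N N' \<longleftrightarrow>
     (\<forall>\<phi>. wf_fm M \<phi> \<and> qf \<phi> \<and> pars \<phi> \<subseteq> N \<and>
        (\<exists>e. (\<forall>v\<in>fv \<phi>. e v \<in> N') \<and> sat M e \<phi>) \<longrightarrow>
        (\<exists>e. (\<forall>v\<in>fv \<phi>. e v \<in> N) \<and> sat M e \<phi>))"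

definition PAC :: "'k rel \<Rightarrow> ('f, 'r, 'a) struc \<Rightarrow> 'a set \<Rightarrow> bool" where
  "PAC kappa M N \<longleftrightarrow> small kappa N \<and> substructure M N \<and>
     (\<forall>N'. small kappa N' \<and> substructure M N' \<and> N \<subseteq> N' \<and> regular M N N'
        \<longrightarrow> ex_closed M N N')"

end

theory Submission
  imports Defs
begin

text \<open>Close P under the functions of the structure and under witnesses for every
satisfiable formula with parameters from the set built so far, in \<omega> rounds. The resulting
Skolem hull is a substructure which is existentially closed in the whole structure, hence in every
extension, regular or not; so it is PAC. A language of size < \<kappa> has < \<kappa> formulas over a
set of size < \<kappa>, and this keeps the hull small.\<close>

unbundle cardinal_syntax

lemma finite_subset_UN_mono:
  fixes X :: "nat \<Rightarrow> 'a set"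
  assumes "mono X" "finite F" "F \<subseteq> (\<Union>n. X n)"
  obtains n where "F \<subseteq> X n"
proof -
  have "X m \<subseteq> X n \<or> X n \<subseteq> X m" for m n
    using nat_le_linear[of m n] monoD[OF \<open>mono X\<close>] by blast
  then have "subset.chain UNIV (range X)"
    by (auto simp: subset.chain_def)
  then show ?thesis
    using finite_subset_Union_chain[of F "range X" UNIV] assms that by blast
qed

lemma card_of_subset_ordLeq: "A \<subseteq> B \<Longrightarrow> |B| \<le>o |C| \<Longrightarrow> |A| \<le>o |C|"
  using card_of_mono1 ordLeq_transitive by blast

lemma card_of_image_ordLeq: "|A| \<le>o |C| \<Longrightarrow> |f ` A| \<le>o |C|"
  using card_of_image ordLeq_transitive by blast

definition trms_over :: "'a set \<Rightarrow> ('f, 'a) trm set" where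
  "trms_over S = {t. parst t \<subseteq> S}"

definition fms_over :: "'a set \<Rightarrow> ('f, 'r, 'a) fm set" where
  "fms_over S = {p. pars p \<subseteq> S}"

fun trms_level :: "'a set \<Rightarrow> nat \<Rightarrow> ('f, 'a) trm set" where
  "trms_level S 0 = range Var \<union> Par ` S"
| "trms_level S (Suc n) =
     trms_level S n \<union> (\<lambda>(f, ts). App f ts) ` (UNIV \<times> lists (trms_level S n))"

fun fms_level :: "'a set \<Rightarrow> nat \<Rightarrow> ('f, 'r, 'a) fm set" where
  "fms_level S 0 =
     (\<lambda>(s, t). FEq s t) ` (trms_over S \<times> trms_over S) \<union>
     (\<lambda>(r, ts). FRel r ts) ` (UNIV \<times> lists (trms_over S))"
| "fms_level S (Suc n) =
     fms_level S n \<union> FNeg ` fms_level S n \<union>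
     (\<lambda>(p, q). FConj p q) ` (fms_level S n \<times> fms_level S n) \<union>
     (\<lambda>(x, p). FEx x p) ` (UNIV \<times> fms_level S n)"

lemma trms_over_eq_UN_trms_level:
  fixes S :: "'a set"
  shows "trms_over S = (\<Union>n. trms_level S n :: ('f, 'a) trm set)"
proof (intro equalityI subsetI)
  fix t :: "('f, 'a) trm"
  assume "t \<in> trms_over S"
  then show "t \<in> (\<Union>n. trms_level S n)"
  proof (induction t)
    case (App f ts)
    have "mono (trms_level S :: nat \<Rightarrow> ('f, 'a) trm set)"
      unfolding mono_iff_le_Suc by (simp add: sup_assoc)
    moreover have "set ts \<subseteq> (\<Union>n. trms_level S n)"
      using App.IH App.prems by (auto simp: trms_over_def UN_subset_iff)
    ultimately obtain n where "set ts \<subseteq> trms_level S n"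
      using finite_subset_UN_mono by blast
    then have "App f ts \<in> trms_level S (Suc n)"
      by (auto simp: in_lists_conv_set intro: image_eqI[where x="(f, ts)"])
    then show ?case by blast
  next
    case (Var v)
    have "Var v \<in> trms_level S 0" by simp
    then show ?case by blast
  next
    case (Par a)
    then have "Par a \<in> trms_level S 0" by (simp add: trms_over_def)
    then show ?case by blast
  qed
next
  fix t :: "('f, 'a) trm"
  assume "t \<in> (\<Union>n. trms_level S n)"
  then obtain n where "t \<in> trms_level S n" by blast
  then show "t \<in> trms_over S"
  proof (induction n arbitrary: t)
    case (Suc n)
    then show ?case by (fastforce simp: trms_over_def in_lists_conv_set)
  qed (auto simp: trms_over_def)
qed

lemma fms_over_subset_UN_fms_level:
  fixes S :: "'a set"
  shows "fms_over S \<subseteq> (\<Union>n. fms_level S n :: ('f, 'r, 'a) fm set)"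
proof
  fix p :: "('f, 'r, 'a) fm"
  have mono: "mono (fms_level S :: nat \<Rightarrow> ('f, 'r, 'a) fm set)"
    unfolding mono_iff_le_Suc by (simp add: sup_assoc)
  assume "p \<in> fms_over S"
  then show "p \<in> (\<Union>n. fms_level S n)"
  proof (induction p)
    case (FEq s t)
    then have "(s, t) \<in> trms_over S \<times> trms_over S" by (simp add: fms_over_def trms_over_def)
    then have "FEq s t \<in> fms_level S 0" by (auto intro: image_eqI[where x="(s, t)"])
    then show ?case by blast
  next
    case (FRel r ts)
    then have "(r, ts) \<in> UNIV \<times> lists (trms_over S)"
      by (auto simp: fms_over_def trms_over_def)
    then have "FRel r ts \<in> fms_level S 0" by (auto intro: image_eqI[where x="(r, ts)"])
    then show ?case by blast
  next
    case (FNeg p)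
    then obtain n where "p \<in> fms_level S n" by (auto simp: fms_over_def)
    then have "FNeg p \<in> fms_level S (Suc n)" by simp
    then show ?case by blast
  next
    case (FConj p q)
    then have "{p, q} \<subseteq> (\<Union>n. fms_level S n)" by (simp add: fms_over_def)
    then obtain n where "{p, q} \<subseteq> fms_level S n"
      using finite_subset_UN_mono[OF mono] by (metis finite.emptyI finite_insert)
    then have "FConj p q \<in> fms_level S (Suc n)" by (auto intro: image_eqI[where x="(p, q)"])
    then show ?case by blast
  next
    case (FEx x p)
    then obtain n where "p \<in> fms_level S n" by (auto simp: fms_over_def)
    then have "FEx x p \<in> fms_level S (Suc n)" by (auto intro: image_eqI[where x="(x, p)"])
    then show ?case by blast
  qed
qed

lemma finite_parst: "finite (parst t)"
  by (induction t) auto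

lemma finite_pars: "finite (pars p)"
  by (induction p) (auto simp: finite_parst)

text \<open>For unsatisfiable p the SOME-assignment is arbitrary, which only adds harmless elements.\<close>

definition skolem_step :: "('f, 'r, 'a) struc \<Rightarrow> 'a set \<Rightarrow> 'a set" where
  "skolem_step M S = S \<union> (\<lambda>(f, xs). fun_int M f xs) ` (UNIV \<times> lists S) \<union>
     (\<Union>p \<in> fms_over S. (SOME e. sat M e p) ` fv p)"

definition skolem_hull :: "('f, 'r, 'a) struc \<Rightarrow> 'a set \<Rightarrow> 'a set" where
  "skolem_hull M S = (\<Union>n. (skolem_step M ^^ n) S)"

context
  fixes C :: "'c set"
  assumes C_infinite: "infinite C"
begin

lemma card_of_finite_ordLeq: "finite A \<Longrightarrow> |A| \<le>o |C|"
  by (rule ordLess_imp_ordLeq, rule finite_ordLess_infinite)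
     (auto simp: C_infinite Field_card_of card_of_well_order_on)

lemma card_of_nat_ordLeq: "|UNIV :: nat set| \<le>o |C|"
  using C_infinite infinite_iff_card_of_nat by blast

lemma card_of_Un_ordLeq: "|A| \<le>o |C| \<Longrightarrow> |B| \<le>o |C| \<Longrightarrow> |A \<union> B| \<le>o |C|"
  by (rule card_of_Un_ordLeq_infinite_Field)
     (auto simp: C_infinite Field_card_of card_of_card_order_on)

lemma card_of_Times_ordLeq: "|A| \<le>o |C| \<Longrightarrow> |B| \<le>o |C| \<Longrightarrow> |A \<times> B| \<le>o |C|"
  by (rule card_of_Times_ordLeq_infinite_Field)
     (auto simp: C_infinite Field_card_of card_of_card_order_on)

lemma card_of_UN_nat_ordLeq:
  fixes X :: "nat \<Rightarrow> 'a set"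
  assumes "\<And>n. |X n| \<le>o |C|"
  shows "|\<Union>(range X)| \<le>o |C|"
  using card_of_UNION_ordLeq_infinite[OF C_infinite card_of_nat_ordLeq] assms by blast

lemma card_of_lists_ordLeq:
  assumes A: "|A| \<le>o |C|"
  shows "|lists A| \<le>o |C|"
proof -
  define L where "L n = {xs \<in> lists A. length xs = n}" for n
  have "|L n| \<le>o |C|" for n
  proof (induction n)
    case 0
    have "L 0 = {[]}" by (auto simp: L_def)
    then show ?case by (simp add: card_of_finite_ordLeq)
  next
    case (Suc n)
    have "L (Suc n) \<subseteq> (\<lambda>(x, xs). x # xs) ` (A \<times> L n)"
    proof
      fix ys assume "ys \<in> L (Suc n)"
      then obtain x xs where "ys = x # xs" "x \<in> A" "xs \<in> L n"
        by (cases ys) (auto simp: L_def)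
      then show "ys \<in> (\<lambda>(x, xs). x # xs) ` (A \<times> L n)" by force
    qed
    then show ?case
      by (rule card_of_subset_ordLeq[OF _ card_of_image_ordLeq[OF card_of_Times_ordLeq[OF A Suc]]])
  qed
  moreover have "lists A = (\<Union>n. L n)" by (auto simp: L_def)
  ultimately show ?thesis by (simp add: card_of_UN_nat_ordLeq)
qed

lemma card_of_trms_over_ordLeq:
  assumes S: "|S| \<le>o |C|" and F: "|UNIV :: 'f set| \<le>o |C|"
  shows "|trms_over S :: ('f, 'a) trm set| \<le>o |C|"
proof -
  note C_lemmas = card_of_Un_ordLeq card_of_image_ordLeq
    card_of_Times_ordLeq card_of_lists_ordLeq
  have "|trms_level S n :: ('f, 'a) trm set| \<le>o |C|" for n
  proof (induction n)
    case 0
    show ?case by (simp add: C_lemmas card_of_nat_ordLeq S)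
  next
    case (Suc n)
    then show ?case by (simp add: C_lemmas F)
  qed
  then show ?thesis
    by (simp add: trms_over_eq_UN_trms_level card_of_UN_nat_ordLeq)
qed

lemma card_of_fms_over_ordLeq:
  assumes S: "|S| \<le>o |C|"
    and F: "|UNIV :: 'f set| \<le>o |C|" and R: "|UNIV :: 'r set| \<le>o |C|"
  shows "|fms_over S :: ('f, 'r, 'a) fm set| \<le>o |C|"
proof -
  note C_lemmas = card_of_Un_ordLeq card_of_image_ordLeq
    card_of_Times_ordLeq card_of_lists_ordLeq
  have "|fms_level S n :: ('f, 'r, 'a) fm set| \<le>o |C|" for n
  proof (induction n)
    case 0
    show ?case by (simp add: C_lemmas card_of_trms_over_ordLeq[OF S F] R)
  next
    case (Suc n)
    then show ?case by (simp add: C_lemmas card_of_nat_ordLeq)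
  qed
  then have "|\<Union>(range (fms_level S)) :: ('f, 'r, 'a) fm set| \<le>o |C|"
    by (rule card_of_UN_nat_ordLeq)
  then show ?thesis
    using fms_over_subset_UN_fms_level by (rule card_of_subset_ordLeq[rotated])
qed

lemma card_of_skolem_step_ordLeq:
  assumes S: "|S| \<le>o |C|"
    and F: "|UNIV :: 'f set| \<le>o |C|" and R: "|UNIV :: 'r set| \<le>o |C|"
  shows "|skolem_step (M :: ('f, 'r, 'a) struc) S| \<le>o |C|"
proof -
  have "|\<Union>p \<in> fms_over S :: ('f, 'r, 'a) fm set. (SOME e. sat M e p) ` fv p| \<le>o |C|"
  proof (rule card_of_UNION_ordLeq_infinite[OF C_infinite card_of_fms_over_ordLeq[OF S F R]])
    show "\<forall>p \<in> fms_over S. |(SOME e. sat M e p) ` fv p| \<le>o |C|"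
      using card_of_subset_ordLeq[OF subset_UNIV card_of_nat_ordLeq]
      by (blast intro: card_of_image_ordLeq)
  qed
  then show ?thesis
    unfolding skolem_step_def
    by (simp add: card_of_Un_ordLeq card_of_image_ordLeq S
        card_of_Times_ordLeq card_of_lists_ordLeq F)
qed

lemma card_of_skolem_hull_ordLeq:
  assumes S: "|S| \<le>o |C|"
    and F: "|UNIV :: 'f set| \<le>o |C|" and R: "|UNIV :: 'r set| \<le>o |C|"
  shows "|skolem_hull (M :: ('f, 'r, 'a) struc) S| \<le>o |C|"
proof -
  have "|(skolem_step M ^^ n) S| \<le>o |C|" for n
    by (induction n) (simp_all add: S card_of_skolem_step_ordLeq[OF _ F R])
  then show ?thesis
    unfolding skolem_hull_def by (rule card_of_UN_nat_ordLeq)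
qed

end

lemma mono_skolem_step_iterates: "mono (\<lambda>n. (skolem_step M ^^ n) S)"
  unfolding mono_iff_le_Suc skolem_step_def by auto

lemma subset_skolem_hull: "S \<subseteq> skolem_hull M S"
  unfolding skolem_hull_def by (metis UN_upper UNIV_I funpow_0)

lemma finite_subset_skolem_hull:
  assumes "finite F" "F \<subseteq> skolem_hull M S"
  obtains n where "F \<subseteq> (skolem_step M ^^ n) S"
  using finite_subset_UN_mono[OF mono_skolem_step_iterates] assms
  unfolding skolem_hull_def by blast

lemma substructure_skolem_hull: "substructure M (skolem_hull M S)"
  unfolding substructure_def
proof (intro allI impI)
  fix f xs
  assume "length xs = fun_arity M f \<and> set xs \<subseteq> skolem_hull M S"
  then obtain n where "set xs \<subseteq> (skolem_step M ^^ n) S"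
    using finite_subset_skolem_hull by blast
  then have "fun_int M f xs \<in> (skolem_step M ^^ Suc n) S"
    by (force simp: skolem_step_def in_lists_conv_set)
  then show "fun_int M f xs \<in> skolem_hull M S"
    unfolding skolem_hull_def by blast
qed

lemma skolem_hull_witness:
  assumes "pars p \<subseteq> skolem_hull M S" and "sat M e p"
  shows "\<exists>e'. (\<forall>v \<in> fv p. e' v \<in> skolem_hull M S) \<and> sat M e' p"
proof -
  obtain n where n: "pars p \<subseteq> (skolem_step M ^^ n) S"
    using finite_subset_skolem_hull[OF finite_pars assms(1)] .
  let ?e = "SOME e. sat M e p"
  have "sat M ?e p" using assms(2) by (rule someI[where P="\<lambda>e. sat M e p"])
  moreover have "?e ` fv p \<subseteq> (skolem_step M ^^ Suc n) S"
    using n by (auto simp: skolem_step_def fms_over_def)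
  ultimately show ?thesis
    unfolding skolem_hull_def by blast
qed

lemma ex_closed_skolem_hull: "ex_closed M (skolem_hull M S) N'"
  unfolding ex_closed_def using skolem_hull_witness by blast

lemma small_skolem_hull:
  fixes M :: "('f, 'r, 'a) struc" and kappa :: "'k rel"
  assumes kappa: "Card_order kappa"
    and nat: "|UNIV :: nat set| <o kappa"
    and F: "|UNIV :: 'f set| <o kappa" and R: "|UNIV :: 'r set| <o kappa"
    and S: "small kappa S"
  shows "small kappa (skolem_hull M S)"
proof -
  have kappa_infinite: "infinite (Field kappa)"
  proof -
    have "|UNIV :: nat set| <o |Field kappa|"
      using ordLess_ordIso_trans[OF nat ordIso_symmetric[OF card_of_Field_ordIso[OF kappa]]] .
    then show ?thesis
      using infinite_iff_card_of_nat ordLess_imp_ordLeq by blast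
  qed
  \<comment> \<open>Bounding by a fixed infinite C with |C| < \<kappa>, not by \<kappa> itself: \<kappa> need not be
    regular, so a countable union of small sets need not be small.\<close>
  define C where "C = (UNIV :: nat set) <+> (S <+> ((UNIV :: 'f set) <+> (UNIV :: 'r set)))"
  have "|C| <o kappa"
    unfolding C_def using S unfolding small_def
    by (intro card_of_Plus_ordLess_infinite_Field[OF kappa_infinite kappa] nat F R)
  moreover have "infinite C"
    unfolding C_def using card_of_Plus1 infinite_iff_card_of_nat by blast
  moreover have "|S| \<le>o |C|" "|UNIV :: 'f set| \<le>o |C|" "|UNIV :: 'r set| \<le>o |C|"
    unfolding C_def
    by (rule ordLeq_transitive[OF card_of_Plus1 card_of_Plus2]
        ordLeq_transitive[OF ordLeq_transitive[OF card_of_Plus1 card_of_Plus2] card_of_Plus2]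
        ordLeq_transitive[OF ordLeq_transitive[OF card_of_Plus2 card_of_Plus2] card_of_Plus2])+
  ultimately show ?thesis
    unfolding small_def
    using card_of_skolem_hull_ordLeq[of C S] ordLeq_ordLess_trans by blast
qed

theorem mainTheorem20:
  fixes M :: "('f, 'r, 'a) struc" and kappa :: "'k rel" and P :: "'a set"
  assumes "Card_order kappa"
    and "(card_of (UNIV :: nat set), kappa) \<in> ordLess"
    and "(card_of (UNIV :: 'f set), kappa) \<in> ordLess"
    and "(card_of (UNIV :: 'r set), kappa) \<in> ordLess"
    and "saturated kappa M"
    and "strongly_homogeneous kappa M"
    and "small kappa P"
    and "substructure M P"
  shows "\<exists>Ps. small kappa Ps \<and> substructure M Ps \<and> P \<subseteq> Ps \<and> PAC kappa M Ps"
proof -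
  have small: "small kappa (skolem_hull M P)"
    using assms(1-4,7) by (rule small_skolem_hull)
  have "PAC kappa M (skolem_hull M P)"
    unfolding PAC_def
    using small substructure_skolem_hull ex_closed_skolem_hull by blast
  with small show ?thesis
    by (intro exI[of _ "skolem_hull M P"] conjI substructure_skolem_hull subset_skolem_hull)
qed

end
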